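(* Let $k\ge 4$, $n=2k-1$, $\lambda\in\overline{\mathcal{U}}_{T_n}$, and let $Y=\mathrm{KN}(S_\lambda)$ with hook lengths $h_{i,j}$. Write the elements of $S_\lambda$ increasingly as $0=s_0<s_1<\cdots$ and let $z$ be the index with $s_z=n-2$. Then for every $1\le i\le z$, $$h_{i,i}=2\,h_{i,z+1}.$$
   Context: A partition of $N$ into distinct parts is a sequence $\lambda=(\lambda_1<\dots<\lambda_t)$ of positive integers with sum $N$ and $t\ge 2$, identified with its set of parts. Missing parts: $\mathcal{M}_\lambda=\{1,\dots,\lambda_t\}\setminus\lambda$. $\lambda$ is refinable if two distinct missing parts sum to a part of $\lambda$, unrefinable otherwise; $\mathcal{U}_N$ is the set of unrefinable partitions of $N$. An element of $\mathcal{U}_N$ is maximal if its largest part is the maximum of the largest parts of elements of $\mathcal{U}_N$; $\widetilde{\mathcal{U}}_N$ is the set of these and $\overline{\mathcal{U}}_N=\{\lambda\in\widetilde{\mathcal{U}}_N:\#\mathcal{M}_\lambda=\lfloor\lambda_t/2\rfloor\}$. $T_n=n(n+1)/2$. For $\lambda\in\overline{\mathcal{U}}_{T_n}$ (with $n=2k-1$, $k\ge 4$) one knows $\lambda_t=2n-4$, $t=n-2$ and $n-2\notin\lambda$. $S_\lambda=\mathbb{N}_0\setminus\lambda$. The Keith–Nath transformation sends a set $S\subseteq\mathbb{N}_0$ with $0\in S$ and finite complement to the Young diagram $\mathrm{KN}(S)$ whose boundary is the lattice path that, starting at the origin, takes for $j=0,1,\dots,\max(\mathbb{N}_0\setminus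 S)$ an east step if $j\in S$ and a north step otherwise. Diagrams are in English convention; $h_{i,j}$ is the hook length of the cell in row $i$ (from the top) and column $j$ (from the left): (cells to its right in its row) + (cells below it in its column) + 1. *)

theory Defs
  imports Main
begin

definition distinct_partition :: "nat \<Rightarrow> nat set \<Rightarrow> bool" where
  "distinct_partition N lam \<longleftrightarrow> finite lam \<and> 0 \<notin> lam \<and> card lam \<ge> 2 \<and> \<Sum>lam = N"

definition missing :: "nat set \<Rightarrow> nat set" where
  "missing lam = {1..Max lam} - lam"

definition refinable :: "nat set \<Rightarrow> bool" where
  "refinable lam \<longleftrightarrow> (\<exists>a b. a \<in> missing lam \<and> b \<in> missing lam \<and> a \<noteq> b \<and> a + b \<in> lam)"

definition unref :: "nat \<Rightarrow> nat set set" where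
  "unref N = {lam. distinct_partition N lam \<and> \<not> refinable lam}"

definition unref_max :: "nat \<Rightarrow> nat set set" where
  "unref_max N = {lam \<in> unref N. Max lam = Max (Max ` unref N)}"

definition unref_bar :: "nat \<Rightarrow> nat set set" where
  "unref_bar N = {lam \<in> unref_max N. card (missing lam) = Max lam div 2}"

definition tri :: "nat \<Rightarrow> nat" where
  "tri n = n * (n + 1) div 2"

definition S_of :: "nat set \<Rightarrow> nat set" where
  "S_of lam = UNIV - lam"

text \<open>For S with 0 in S and finite complement G,
  the lattice path takes, for j = 0..Max G, an east step if j is in S and a north
  step otherwise. The north step at gap g is preceded by #{s in S. s < g} east
  steps, so the row of the diagram determined by that north step has this length.
  In English convention the top row (row 1) comes from the last north step, i.e. the
  largest gap; row i comes from the i-th largest gap. Cells are (row, column),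
  both 1-indexed.\<close>
definition kth_largest :: "nat set \<Rightarrow> nat \<Rightarrow> nat" where
  "kth_largest G i = rev (sorted_list_of_set G) ! (i - 1)"

definition KN :: "nat set \<Rightarrow> (nat \<times> nat) set" where
  "KN S = {(i, j). 1 \<le> i \<and> i \<le> card (UNIV - S) \<and> 1 \<le> j \<and>
                   j \<le> card {s \<in> S. s < kth_largest (UNIV - S) i}}"

definition hook :: "(nat \<times> nat) set \<Rightarrow> nat \<Rightarrow> nat \<Rightarrow> nat" where
  "hook Y i j = card {j'. j < j' \<and> (i, j') \<in> Y} + card {i'. i < i' \<and> (i', j) \<in> Y} + 1"

end

theory Submission
  imports Defs
begin

text \<open>Let \<open>L\<close> be the largest part of \<open>lam\<close>. Unrefinability forbids two missing parts summing
  to \<open>L\<close>, so \<open>c \<mapsto> min c (L - c)\<close> embeds the missing parts into \<open>{1..L div 2}\<close>; with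
  exactly \<open>L div 2\<close> missing parts it is onto, hence exactly one of \<open>c\<close>, \<open>L - c\<close> is a part
  for \<open>0 < c < L/2\<close>. Summing the parts of such a partition shows \<open>L \<le> 2(n - 2)\<close> when the
  sum is \<open>T_n\<close>, and \<open>{1..<n-2} \<union> {n+1, 2(n-2)}\<close> attains the bound; so \<open>L = 2m\<close> for
  \<open>m = n - 2\<close> and \<open>lam\<close> is mirror symmetric about \<open>m\<close>.

  In the Keith--Nath diagram of \<open>S\<close>, the cell in the row of the gap \<open>g\<close> and the column of
  \<open>s \<in> S\<close>, \<open>s < g\<close>, has hook length \<open>g - s\<close>. For \<open>i \<le> z\<close> the mirror symmetry makes the
  \<open>i\<close>-th largest part \<open>g\<close> equal to \<open>2m - s_(i-1)\<close>, where \<open>s_(i-1)\<close> labels column \<open>i\<close>,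
  while \<open>s_z = m\<close> labels column \<open>z + 1\<close>. Hence \<open>h(i,i) = g - (2m - g) = 2 (g - m) = 2 h(i,z+1)\<close>.\<close>

lemma kth_largest_eq_nth:
  assumes "1 \<le> i" "i \<le> card A"
  shows "kth_largest A i = sorted_list_of_set A ! (card A - i)"
  using assms by (simp add: kth_largest_def rev_nth Suc_diff_le)

lemma bij_betw_kth_largest:
  assumes "finite A"
  shows "bij_betw (kth_largest A) {1..card A} A"
proof -
  have "bij_betw (\<lambda>i. i - 1) {1..card A} {..<card A}"
    by (rule bij_betw_byWitness[where f' = Suc]) auto
  moreover have "bij_betw ((!) (rev (sorted_list_of_set A))) {..<card A} A"
    using assms by (intro bij_betw_nth) auto
  ultimately show ?thesis
    unfolding kth_largest_def by (auto dest: bij_betw_trans simp: comp_def)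
qed

lemma kth_largest_in:
  assumes "finite A" "i \<in> {1..card A}"
  shows "kth_largest A i \<in> A"
  using bij_betw_apply[OF bij_betw_kth_largest[OF assms(1)] assms(2)] .

lemma kth_largest_less_iff:
  assumes "finite A" "i \<in> {1..card A}" "i' \<in> {1..card A}"
  shows "kth_largest A i' < kth_largest A i \<longleftrightarrow> i < i'"
proof -
  have less: "kth_largest A b < kth_largest A a"
    if "a \<in> {1..card A}" "b \<in> {1..card A}" "a < b" for a b
    using that sorted_wrt_nth_less[OF sorted_list_of_set.strict_sorted_key_list_of_set,
        of "card A - b" "card A - a" A]
    by (simp add: kth_largest_eq_nth)
  show ?thesis
    using less[of i i'] less[of i' i] assms by (cases i i' rule: linorder_cases) auto
qed

lemma card_filter_kth_largest:
  assumes "finite A"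
  shows "card {x \<in> A. P x} = card {i \<in> {1..card A}. P (kth_largest A i)}"
proof -
  have inj: "inj_on (kth_largest A) {1..card A}" and img: "kth_largest A ` {1..card A} = A"
    using bij_betw_kth_largest[OF assms] unfolding bij_betw_def by blast+
  have "kth_largest A ` {i \<in> {1..card A}. P (kth_largest A i)} = {x \<in> kth_largest A ` {1..card A}. P x}"
    by auto
  then have "{x \<in> A. P x} = kth_largest A ` {i \<in> {1..card A}. P (kth_largest A i)}"
    unfolding img by simp
  moreover have "inj_on (kth_largest A) {i \<in> {1..card A}. P (kth_largest A i)}"
    using inj by (rule inj_on_subset) blast
  ultimately show ?thesis by (simp add: card_image)
qed

lemma card_ge_kth_largest:
  assumes "finite A" "i \<in> {1..card A}"
  shows "card {x \<in> A. kth_largest A i \<le> x} = i"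
proof -
  have "kth_largest A i \<le> kth_largest A i' \<longleftrightarrow> i' \<le> i" if "i' \<in> {1..card A}" for i'
    using kth_largest_less_iff[OF assms that] by (metis not_less)
  then have "{i' \<in> {1..card A}. kth_largest A i \<le> kth_largest A i'} = {1..i}"
    using assms(2) by auto
  then show ?thesis using card_filter_kth_largest[OF assms(1)] by simp
qed

lemma mem_KN_iff:
  "(i, j) \<in> KN S \<longleftrightarrow>
    i \<in> {1..card (UNIV - S)} \<and> 1 \<le> j \<and> j \<le> card {s \<in> S. s < kth_largest (UNIV - S) i}"
  unfolding KN_def by auto

lemma card_split_greaterThanLessThan:
  fixes S :: "nat set"
  assumes "c < g"
  shows "card {x \<in> UNIV - S. c < x \<and> x < g} + card {s \<in> S. c < s \<and> s < g} = g - Suc c"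
proof -
  have "{c<..<g} = {x \<in> UNIV - S. c < x \<and> x < g} \<union> {s \<in> S. c < s \<and> s < g}" by auto
  then have "card {c<..<g} = card {x \<in> UNIV - S. c < x \<and> x < g} + card {s \<in> S. c < s \<and> s < g}"
    by (simp add: card_Un_disjoint disjoint_iff)
  then show ?thesis by simp
qed

lemma card_le_le_card_less_iff:
  fixes S :: "nat set"
  assumes "c \<in> S"
  shows "card {s \<in> S. s \<le> c} \<le> card {s \<in> S. s < x} \<longleftrightarrow> c < x"
proof -
  define row where "row x = card {s \<in> S. s < x}" for x
  have fin_below: "finite {s \<in> S. s < x}" for x
    by (rule finite_subset[of _ "{..<x}"]) auto
  have row_mono: "row x \<le> row y" if "x \<le> y" for x y
    unfolding row_def using that by (intro card_mono fin_below) auto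
  have "{s \<in> S. s \<le> c} = insert c {s \<in> S. s < c}"
    using assms by auto
  then have "card {s \<in> S. s \<le> c} = Suc (row c)"
    unfolding row_def using fin_below by simp
  moreover have "Suc (row c) \<le> row x \<longleftrightarrow> c < x"
  proof
    show "c < x" if "Suc (row c) \<le> row x"
      using that row_mono[of x c] by linarith
    show "Suc (row c) \<le> row x" if "c < x"
      using row_mono[of "Suc c" x] that \<open>card {s \<in> S. s \<le> c} = Suc (row c)\<close>
      unfolding row_def by (simp add: less_Suc_eq_le Suc_le_eq)
  qed
  ultimately show ?thesis unfolding row_def by simp
qed

lemma hook_KN_eq_diff:
  fixes S :: "nat set"
  assumes fin: "finite (UNIV - S)" and i: "i \<in> {1..card (UNIV - S)}"
    and c: "c \<in> S" "c < kth_largest (UNIV - S) i"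
  shows "(i, card {s \<in> S. s \<le> c}) \<in> KN S \<and>
    hook (KN S) i (card {s \<in> S. s \<le> c}) = kth_largest (UNIV - S) i - c"
proof -
  define G where "G = UNIV - S"
  define g where "g = kth_largest G"
  define row where "row x = card {s \<in> S. s < x}" for x
  define j where "j = card {s \<in> S. s \<le> c}"
  have finG: "finite G" and iG: "i \<in> {1..card G}" and cg: "c < g i"
    using fin i c(2) unfolding G_def g_def by simp_all
  have KN_iff: "(i', j') \<in> KN S \<longleftrightarrow> i' \<in> {1..card G} \<and> 1 \<le> j' \<and> j' \<le> row (g i')" for i' j'
    unfolding mem_KN_iff G_def g_def row_def ..
  have j_le_row_iff: "j \<le> row x \<longleftrightarrow> c < x" for x
    unfolding j_def row_def using c(1) by (rule card_le_le_card_less_iff)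
  have fin_le: "finite {s \<in> S. s \<le> c}"
    by (rule finite_subset[of _ "{..c}"]) auto
  then have j_pos: "1 \<le> j"
    unfolding j_def using c(1) by (simp add: Suc_le_eq card_gt_0_iff) blast
  have "{s \<in> S. s < g i} = {s \<in> S. s \<le> c} \<union> {s \<in> S. c < s \<and> s < g i}"
    using cg by auto
  moreover have "finite {s \<in> S. c < s \<and> s < g i}"
    by (rule finite_subset[of _ "{..<g i}"]) auto
  ultimately have row_g: "row (g i) = j + card {s \<in> S. c < s \<and> s < g i}"
    unfolding row_def j_def using fin_le by (simp add: card_Un_disjoint disjoint_iff)
  have "{j'. j < j' \<and> (i, j') \<in> KN S} = {j<..row (g i)}"
    using KN_iff iG j_pos by auto
  then have arm: "card {j'. j < j' \<and> (i, j') \<in> KN S} = card {s \<in> S. c < s \<and> s < g i}"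
    using row_g by simp
  have "i < i' \<longleftrightarrow> g i' < g i" if "i' \<in> {1..card G}" for i'
    using kth_largest_less_iff[OF finG iG that] unfolding g_def by simp
  then have "{i'. i < i' \<and> (i', j) \<in> KN S} = {i' \<in> {1..card G}. c < g i' \<and> g i' < g i}"
    using KN_iff j_le_row_iff j_pos by blast
  then have leg: "card {i'. i < i' \<and> (i', j) \<in> KN S} = card {x \<in> G. c < x \<and> x < g i}"
    using card_filter_kth_largest[OF finG, of "\<lambda>x. c < x \<and> x < g i"] unfolding g_def by simp
  have "(i, j) \<in> KN S"
    using KN_iff iG j_pos row_g by simp
  moreover have "hook (KN S) i j = g i - c"
    unfolding hook_def arm leg G_def using card_split_greaterThanLessThan[OF cg, of S] cg by simp
  ultimately show ?thesis unfolding j_def g_def G_def by simp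
qed

text \<open>The case \<open>c = 0\<close> of the second conjunct says \<open>0 \<notin> lam\<close> and \<open>2m \<in> lam\<close>.\<close>
definition mirror_symmetric :: "nat \<Rightarrow> nat set \<Rightarrow> bool" where
  "mirror_symmetric m lam \<longleftrightarrow> (\<forall>x\<in>lam. x \<le> 2*m) \<and> (\<forall>c<m. c \<notin> lam \<longleftrightarrow> 2*m - c \<in> lam)"

lemma card_parts_ge_mirror:
  fixes lam :: "nat set"
  assumes sym: "mirror_symmetric m lam"
    and "d < m"
  shows "card {x \<in> lam. 2*m - d \<le> x} = card {c. c \<le> d \<and> c \<notin> lam}"
proof -
  have bound: "\<forall>x\<in>lam. x \<le> 2*m" and mirror: "\<forall>c<m. c \<notin> lam \<longleftrightarrow> 2*m - c \<in> lam"
    using sym unfolding mirror_symmetric_def by auto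
  have "{x \<in> lam. 2*m - d \<le> x} = (\<lambda>c. 2*m - c) ` {c. c \<le> d \<and> c \<notin> lam}"
  proof (intro equalityI subsetI)
    fix x assume x: "x \<in> {x \<in> lam. 2*m - d \<le> x}"
    then have "2*m - x \<le> d" "2*m - (2*m - x) = x" using bound by auto
    moreover have "2*m - x \<notin> lam" using mirror x calculation \<open>d < m\<close> by auto
    ultimately show "x \<in> (\<lambda>c. 2*m - c) ` {c. c \<le> d \<and> c \<notin> lam}"
      by (intro image_eqI[of x _ "2*m - x"]) auto
  next
    fix x assume "x \<in> (\<lambda>c. 2*m - c) ` {c. c \<le> d \<and> c \<notin> lam}"
    then show "x \<in> {x \<in> lam. 2*m - d \<le> x}" using mirror \<open>d < m\<close> by auto
  qed
  moreover have "inj_on (\<lambda>c. 2*m - c) {c. c \<le> d \<and> c \<notin> lam}"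
    using \<open>d < m\<close> by (intro inj_onI) auto
  ultimately show ?thesis by (simp add: card_image)
qed

lemma card_parts_above_mirror:
  fixes lam :: "nat set"
  assumes sym: "mirror_symmetric m lam"
    and "0 < m"
  shows "card {x \<in> lam. m < x} = card {c. c < m \<and> c \<notin> lam}"
  using card_parts_ge_mirror[OF sym, of "m - 1"] \<open>0 < m\<close>
  by (simp add: Suc_le_eq less_Suc_eq_le[symmetric])

lemma kth_largest_mirror:
  fixes lam :: "nat set"
  assumes fin: "finite lam" and sym: "mirror_symmetric m lam"
    and i: "i \<in> {1..card {c. c < m \<and> c \<notin> lam}}"
  shows "i \<le> card lam \<and> m < kth_largest lam i \<and> kth_largest lam i \<le> 2*m \<and>
    2*m - kth_largest lam i \<notin> lam \<and> card {c. c \<le> 2*m - kth_largest lam i \<and> c \<notin> lam} = i"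
proof -
  have bound: "\<forall>x\<in>lam. x \<le> 2*m" and mirror: "\<forall>c<m. c \<notin> lam \<longleftrightarrow> 2*m - c \<in> lam"
    using sym unfolding mirror_symmetric_def by auto
  define g where "g = kth_largest lam i"
  have "0 < m" using i by (cases m) auto
  then have above: "card {x \<in> lam. m < x} = card {c. c < m \<and> c \<notin> lam}"
    by (rule card_parts_above_mirror[OF sym])
  moreover have "card {x \<in> lam. m < x} \<le> card lam" using fin by (intro card_mono) auto
  ultimately have i_lam: "i \<in> {1..card lam}" using i by auto
  have g_lam: "g \<in> lam" and card_g: "card {x \<in> lam. g \<le> x} = i"
    unfolding g_def using kth_largest_in[OF fin i_lam] card_ge_kth_largest[OF fin i_lam] by auto
  have "m < g"
  proof (rule ccontr)
    assume "\<not> m < g"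
    then have "insert g {x \<in> lam. m < x} \<subseteq> {x \<in> lam. g \<le> x}" using g_lam by auto
    then have "card (insert g {x \<in> lam. m < x}) \<le> card {x \<in> lam. g \<le> x}"
      by (intro card_mono) (simp_all add: fin)
    then show False using above \<open>\<not> m < g\<close> card_g fin i by simp
  qed
  moreover have "g \<le> 2*m" using bound g_lam by auto
  moreover have "2*m - g \<notin> lam"
  proof -
    have "2*m - g < m" "2*m - (2*m - g) = g" using \<open>m < g\<close> \<open>g \<le> 2*m\<close> by auto
    then show ?thesis using mirror g_lam by auto
  qed
  ultimately show ?thesis
    using card_parts_ge_mirror[OF sym, of "2*m - g"] card_g i_lam unfolding g_def by simp
qed

lemma finite_unref: "finite (unref N)"
proof (rule finite_subset)
  show "unref N \<subseteq> Pow {1..N}"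
  proof
    fix lam assume "lam \<in> unref N"
    then have "finite lam" "0 \<notin> lam" "\<Sum>lam = N"
      unfolding unref_def distinct_partition_def by auto
    then have "x \<in> {1..N}" if "x \<in> lam" for x
      using member_le_sum[of x lam id] that by (cases x) auto
    then show "lam \<in> Pow {1..N}" by auto
  qed
qed simp

lemma unref_witness:
  fixes m :: nat
  assumes "4 \<le> m"
  shows "{1..<m} \<union> {m+3, 2*m} \<in> unref (tri (m+2)) \<and> Max ({1..<m} \<union> {m+3, 2*m}) = 2*m"
proof -
  define W where "W = {1..<m} \<union> {m+3, 2*m}"
  have fin_W: "finite W" unfolding W_def by simp
  have max_W: "Max W = 2*m"
    unfolding W_def using assms by (intro Max_eqI) auto
  have "card {m+3, 2*m} \<le> card W"
    unfolding W_def by (intro card_mono) auto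
  then have card_W: "2 \<le> card W" using assms by simp
  have "\<Sum>{1..<m} = tri (m - 1)"
    using gauss_sum_from_Suc_0[of "m - 1", where ?'a = nat] assms
    by (simp add: tri_def atLeastLessThanSuc_atLeastAtMost[symmetric])
  moreover have "\<Sum>W = \<Sum>{1..<m} + (m + 3 + 2*m)"
    unfolding W_def using assms by (subst sum.union_disjoint) auto
  ultimately have sum_W: "\<Sum>W = tri (m+2)"
    using assms by (cases m) (simp_all add: tri_def algebra_simps)
  have "\<not> refinable W"
  proof
    assume "refinable W"
    then obtain a b where "a \<in> missing W" "b \<in> missing W" "a \<noteq> b" "a + b \<in> W"
      unfolding refinable_def by blast
    moreover have "m \<le> x" if "x \<in> missing W" for x
      using that unfolding missing_def W_def by (auto simp: not_less)
    moreover have "a + b \<le> 2*m"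
      using Max_ge[OF fin_W \<open>a + b \<in> W\<close>] max_W by simp
    ultimately have "m \<le> a" "m \<le> b" "a \<noteq> b" "a + b \<le> 2*m" by auto
    then show False by arith
  qed
  then show ?thesis
    using card_W sum_W max_W unfolding W_def unref_def distinct_partition_def by auto
qed

lemma unrefinable_half_missing_mirror:
  fixes lam :: "nat set"
  assumes fin: "finite lam" and ne: "lam \<noteq> {}" and zero: "0 \<notin> lam" and nr: "\<not> refinable lam"
    and half: "card (missing lam) = Max lam div 2"
  shows "\<forall>c. 0 < c \<and> 2*c < Max lam \<longrightarrow> (c \<notin> lam \<longleftrightarrow> Max lam - c \<in> lam)"
    and "even (Max lam) \<longrightarrow> Max lam div 2 \<notin> lam"
proof -
  define L where "L = Max lam"
  have L_in: "L \<in> lam" unfolding L_def using fin ne by simp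
  have missing_iff: "x \<in> missing lam \<longleftrightarrow> 0 < x \<and> x < L \<and> x \<notin> lam" for x
    using L_in unfolding missing_def L_def by (auto simp: order.order_iff_strict)
  have not_both: "x = y" if "x \<in> missing lam" "y \<in> missing lam" "x + y = L" for x y
    using nr L_in that unfolding refinable_def by auto
  define f where "f x = min x (L - x)" for x
  have "inj_on f (missing lam)"
    by (rule inj_onI) (use not_both missing_iff in \<open>auto simp: f_def min_def split: if_splits\<close>)
  moreover have "f ` missing lam \<subseteq> {1..L div 2}"
    by (auto simp: missing_iff f_def min_def)
  ultimately have "f ` missing lam = {1..L div 2}"
    using half unfolding L_def[symmetric] by (intro card_subset_eq) (auto simp: card_image)
  then have one_missing: "c \<notin> lam \<or> L - c \<notin> lam" if "0 < c" "c \<le> L div 2" for c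
    using that by (force simp: f_def min_def missing_iff)
  show "\<forall>c. 0 < c \<and> 2*c < Max lam \<longrightarrow> (c \<notin> lam \<longleftrightarrow> Max lam - c \<in> lam)"
  proof (intro allI impI)
    fix c assume c: "0 < c \<and> 2*c < Max lam"
    then have "\<not> (c \<in> missing lam \<and> L - c \<in> missing lam)"
      using not_both[of c "L - c"] unfolding L_def by auto
    moreover have "c \<le> L div 2" using c unfolding L_def by presburger
    ultimately show "c \<notin> lam \<longleftrightarrow> Max lam - c \<in> lam"
      using one_missing[of c] c unfolding L_def[symmetric] by (auto simp: missing_iff)
  qed
  show "even (Max lam) \<longrightarrow> Max lam div 2 \<notin> lam"
    using one_missing[of "L div 2"] L_in zero unfolding L_def[symmetric]
    by (cases "L div 2 = 0") auto
qed

lemma sum_mirror: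
  fixes lam :: "nat set"
  defines "L \<equiv> Max lam"
  defines "K \<equiv> (Max lam - 1) div 2"
  assumes fin: "finite lam" and ne: "lam \<noteq> {}" and zero: "0 \<notin> lam"
    and mirror: "\<forall>c. 0 < c \<and> 2*c < L \<longrightarrow> (c \<notin> lam \<longleftrightarrow> L - c \<in> lam)"
    and middle: "even L \<longrightarrow> L div 2 \<notin> lam"
  shows "\<Sum>lam = L + tri K + (\<Sum>c \<in> {c \<in> {1..K}. c \<notin> lam}. L - 2*c)"
proof -
  have L_in: "L \<in> lam" and L_max: "\<And>x. x \<in> lam \<Longrightarrow> x \<le> L"
    unfolding L_def using fin ne by simp_all
  have K_iff: "c \<in> {1..K} \<longleftrightarrow> 0 < c \<and> 2*c < L" for c
    unfolding K_def L_def[symmetric] by auto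
  define h where "h c = (if c \<in> lam then c else L - c)" for c
  have "h ` {1..K} = lam - {L}"
  proof (intro equalityI image_subsetI subsetI)
    fix c assume "c \<in> {1..K}"
    then have "0 < c" "2*c < L" using K_iff by auto
    then show "h c \<in> lam - {L}" using mirror[rule_format, of c] unfolding h_def by auto
  next
    fix x assume x: "x \<in> lam - {L}"
    then have "0 < x" "x < L" using zero L_max by (auto intro: gr0I simp: order.order_iff_strict)
    then consider "2*x < L" | "2*x = L" | "L < 2*x" by linarith
    then show "x \<in> h ` {1..K}"
    proof cases
      case 1
      then have "x \<in> {1..K}" using K_iff \<open>0 < x\<close> by blast
      then show ?thesis using x unfolding h_def by (intro image_eqI[of x _ x]) auto
    next
      case 2
      then show ?thesis using x middle by auto
    next
      case 3
      then have "L - x \<in> {1..K}" using K_iff \<open>x < L\<close> by auto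
      moreover have "L - x \<notin> lam"
        using mirror[rule_format, of "L - x"] 3 x \<open>x < L\<close> by auto
      ultimately show ?thesis unfolding h_def using \<open>x < L\<close> by (intro image_eqI[of x _ "L - x"]) auto
    qed
  qed
  moreover have "inj_on h {1..K}"
  proof (rule inj_onI)
    fix a b assume "a \<in> {1..K}" "b \<in> {1..K}" "h a = h b"
    moreover have "2*a < L" "2*b < L" using calculation(1,2) K_iff by auto
    ultimately show "a = b" unfolding h_def by (auto split: if_splits)
  qed
  ultimately have "\<Sum>(lam - {L}) = sum h {1..K}"
    using sum.reindex[of h "{1..K}" "\<lambda>x. x"] by simp
  also have "\<dots> = (\<Sum>c \<in> {1..K}. c + (if c \<notin> lam then L - 2*c else 0))"
  proof (intro sum.cong refl)
    fix c assume "c \<in> {1..K}"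
    then have "2*c < L" using K_iff by blast
    then show "h c = c + (if c \<notin> lam then L - 2*c else 0)" unfolding h_def by auto
  qed
  also have "\<dots> = tri K + (\<Sum>c \<in> {c \<in> {1..K}. c \<notin> lam}. L - 2*c)"
    using gauss_sum_from_Suc_0[of K, where ?'a = nat] sum.inter_filter[of "{1..K}", symmetric]
    by (simp add: sum.distrib tri_def)
  finally show ?thesis
    using fin L_in by (simp add: sum.remove)
qed

lemma Max_le_mirror_tri:
  fixes lam :: "nat set"
  assumes fin: "finite lam" and ne: "lam \<noteq> {}" and zero: "0 \<notin> lam"
    and mirror: "\<forall>c. 0 < c \<and> 2*c < Max lam \<longrightarrow> (c \<notin> lam \<longleftrightarrow> Max lam - c \<in> lam)"
    and middle: "even (Max lam) \<longrightarrow> Max lam div 2 \<notin> lam"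
    and sum: "\<Sum>lam = tri (p + 2)"
  shows "Max lam \<le> 2*p"
proof (rule ccontr)
  assume "\<not> Max lam \<le> 2*p"
  txt \<open>Write \<open>L = 2K + t\<close> with \<open>t \<in> {1, 2}\<close>. The sum forces \<open>K = p\<close> and \<open>E = 3 - t\<close>, but
    every summand \<open>L - 2c\<close> of \<open>E\<close> with \<open>c < K\<close> exceeds \<open>3 - t\<close>, so \<open>E\<close> is \<open>0\<close> or \<open>t\<close>.\<close>
  define L where "L = Max lam"
  define K where "K = (L - 1) div 2"
  define E where "E = (\<Sum>c \<in> {c \<in> {1..K}. c \<notin> lam}. L - 2*c)"
  define t where "t = L - 2*K"
  have t: "t = 1 \<or> t = 2" and L: "L = 2*K + t" and "p \<le> K"
    using \<open>\<not> Max lam \<le> 2*p\<close> unfolding t_def K_def L_def by auto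
  have two_tri: "2 * tri q = q * (q + 1)" for q
    unfolding tri_def by simp
  have "L + tri K + E = tri (p + 2)"
    using sum_mirror[OF fin ne zero mirror middle] sum
    unfolding L_def[symmetric] K_def[symmetric] E_def[symmetric] by simp
  then have "2 * L + K * (K + 1) + 2 * E = (p + 2) * (p + 3)"
    using two_tri[of K] two_tri[of "p + 2"] by (simp add: algebra_simps)
  then have eq: "4*K + 2*t + K*K + K + 2*E = p*p + 5*p + 6"
    unfolding L by (simp add: algebra_simps)
  have "K = p"
  proof (rule ccontr)
    assume "K \<noteq> p"
    then have "(p + 1) * (p + 1) \<le> K * K" using \<open>p \<le> K\<close> by (intro mult_le_mono) auto
    moreover have "1 \<le> t" "p + 1 \<le> K" using t \<open>p \<le> K\<close> \<open>K \<noteq> p\<close> by auto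
    ultimately show False using eq by (simp add: algebra_simps)
  qed
  then have E: "E = 3 - t" "t \<le> 2" using eq t by auto
  have "{c \<in> {1..K}. c \<notin> lam} \<subseteq> {K}"
  proof
    fix c assume c: "c \<in> {c \<in> {1..K}. c \<notin> lam}"
    have "L - 2*c \<le> E"
      unfolding E_def using c by (intro member_le_sum) auto
    then show "c \<in> {K}" using c E L t by auto
  qed
  then consider "{c \<in> {1..K}. c \<notin> lam} = {}" | "{c \<in> {1..K}. c \<notin> lam} = {K}"
    unfolding subset_singleton_iff by blast
  then have "E = 0 \<or> E = t"
  proof cases
    case 1
    then show ?thesis unfolding E_def 1 by simp
  next
    case 2
    then show ?thesis unfolding E_def 2 by (simp add: L)
  qed
  then show False using E t by auto
qed

lemma unref_bar_mirror:
  fixes m :: nat and lam :: "nat set"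
  assumes "4 \<le> m" and lam: "lam \<in> unref_bar (tri (m + 2))"
  shows "finite lam \<and> mirror_symmetric m lam"
proof -
  have unref: "lam \<in> unref (tri (m + 2))" and max: "Max lam = Max (Max ` unref (tri (m + 2)))"
    and half: "card (missing lam) = Max lam div 2"
    using lam unfolding unref_bar_def unref_max_def by auto
  then have fin: "finite lam" and zero: "0 \<notin> lam" and "2 \<le> card lam"
    and sum: "\<Sum>lam = tri (m + 2)" and nr: "\<not> refinable lam"
    unfolding unref_def distinct_partition_def by auto
  then have ne: "lam \<noteq> {}" by auto
  note mirror = unrefinable_half_missing_mirror[OF fin ne zero nr half]
  have "Max lam \<le> 2*m"
    using Max_le_mirror_tri[OF fin ne zero mirror sum] .
  moreover have "2*m \<le> Max lam"
    using unref_witness[OF \<open>4 \<le> m\<close>] finite_unref max by (metis Max_ge finite_imageI imageI)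
  ultimately have L: "Max lam = 2*m" by simp
  then have "2*m \<in> lam" and bound: "\<forall>x\<in>lam. x \<le> 2*m"
    using fin ne L[symmetric] by auto
  moreover have "c \<notin> lam \<longleftrightarrow> 2*m - c \<in> lam" if "c < m" for c
    using mirror(1) zero \<open>2*m \<in> lam\<close> that unfolding L by (cases "c = 0") auto
  ultimately show ?thesis using fin unfolding mirror_symmetric_def by blast
qed

theorem lemma3p8:
  fixes k n z :: nat and lam :: "nat set"
  assumes "k \<ge> 4"
    and "n = 2 * k - 1"
    and "lam \<in> unref_bar (tri n)"
    and "n - 2 \<in> S_of lam"
    and "z = card {s \<in> S_of lam. s < n - 2}"
  shows "\<forall>i. 1 \<le> i \<and> i \<le> z \<longrightarrow>
           (i, i) \<in> KN (S_of lam) \<and> (i, z + 1) \<in> KN (S_of lam) \<and>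
           hook (KN (S_of lam)) i i = 2 * hook (KN (S_of lam)) i (z + 1)"
proof (intro allI impI)
  fix i assume i: "1 \<le> i \<and> i \<le> z"
  define m where "m = n - 2"
  have "4 \<le> m" "n = m + 2" using assms(1,2) unfolding m_def by auto
  then have fin: "finite lam" and sym: "mirror_symmetric m lam"
    using unref_bar_mirror assms(3) by auto
  have S_compl: "UNIV - S_of lam = lam"
    and S_filter: "{s \<in> S_of lam. P s} = {c. P c \<and> c \<notin> lam}" for P
    unfolding S_of_def by auto
  have m_S: "m \<in> S_of lam" using assms(4) unfolding m_def .
  have z: "z = card {c. c < m \<and> c \<notin> lam}" using assms(5) S_filter unfolding m_def by simp
  define g where "g = kth_largest lam i"
  have "i \<le> card lam" "m < g" "g \<le> 2*m" "2*m - g \<in> S_of lam"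
    "card {s \<in> S_of lam. s \<le> 2*m - g} = i"
    using kth_largest_mirror[OF fin sym, of i] i z S_filter unfolding g_def S_of_def by auto
  moreover have "card {s \<in> S_of lam. s \<le> m} = z + 1"
  proof -
    have "{s \<in> S_of lam. s \<le> m} = insert m {s \<in> S_of lam. s < m}" using m_S by auto
    then show ?thesis using assms(5) unfolding m_def by simp
  qed
  ultimately show "(i, i) \<in> KN (S_of lam) \<and> (i, z + 1) \<in> KN (S_of lam) \<and>
           hook (KN (S_of lam)) i i = 2 * hook (KN (S_of lam)) i (z + 1)"
    using hook_KN_eq_diff[of "S_of lam" i "2*m - g"] hook_KN_eq_diff[of "S_of lam" i m] fin i m_S
    unfolding S_compl g_def by auto
qed

end
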